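(* Let $E=\mathbb{R}^n$, let $d\ge 1$ be an integer, $m\in(0,1)$, $a>0$, and let $\mu$ be a probability measure on $E$ such that for every $x\in\operatorname{supp}\mu$ and every $r<(m/a)^{1/d}$ we have $\mu(B(x,r))\ge a r^d$, where $B(x,r)$ is the open ball. Then $c(\mu):=\sup_{x\in\operatorname{supp}\mu} d_{\mu,m}(x)\le a^{-1/d} m^{1/d}$.
   Context: For a probability measure $\mu$ on $E$, $t\in[0,1)$ and $x\in E$, let $\delta_{\mu,t}(x)=\inf\{r\ge 0:\ \mu(\bar B(x,r))>t\}$, where $\bar B(x,r)$ is the closed Euclidean ball. The distance to measure (DTM) with parameter $m$ is the function $d_{\mu,m}:E\to\mathbb{R}$ defined by $d_{\mu,m}^2(x)=\frac1m\int_0^m\delta_{\mu,t}^2(x)\,dt$. *)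

theory Defs
  imports "HOL-Probability.Probability"
begin

text \<open>Support of a Borel measure on a Euclidean space: the set of points all of whose
  open neighbourhoods (balls) have positive measure, i.e. the smallest closed set of full measure.\<close>
definition msupp :: "'a::euclidean_space measure \<Rightarrow> 'a set" where
  "msupp M = {x. \<forall>r>0. 0 < emeasure M (ball x r)}"

definition dtm_delta :: "'a::euclidean_space measure \<Rightarrow> real \<Rightarrow> 'a \<Rightarrow> real" where
  "dtm_delta M t x = Inf {r. 0 \<le> r \<and> measure M (cball x r) > t}"

definition dtm :: "'a::euclidean_space measure \<Rightarrow> real \<Rightarrow> 'a \<Rightarrow> real" where
  "dtm M m x = sqrt ((1 / m) * (LBINT t=0..m. (dtm_delta M t x)\<^sup>2))"

end

theory Submission
  imports Defs
begin

(* Fix a support point x and put r0 = (m/a)^(1/d).  For every level t < m the mass bound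
   yields a radius r < r0 with mu(cball x r) >= a r^d > t, so delta_{mu,t}(x) <= r0.
   Averaging delta^2 over t in (0,m) gives d_{mu,m}(x) <= r0 = a^(-1/d) m^(1/d). *)

lemma interval_integral_le_const:
  fixes f :: "real \<Rightarrow> real" and a b C :: real
  assumes "a \<le> b" "0 \<le> C" "\<And>t. a < t \<Longrightarrow> t < b \<Longrightarrow> f t \<le> C"
  shows "(LBINT t=a..b. f t) \<le> C * (b - a)"
proof (cases "interval_lebesgue_integrable lborel a b f")
  case True
  have "(LBINT t=a..b. f t) \<le> (LBINT t=a..b. C)"
    using True interval_integral_const(1)[of a b C] assms
    unfolding interval_lebesgue_integral_def interval_lebesgue_integrable_def
    by (auto intro!: set_integral_mono simp: einterval_iff)
  then show ?thesis by simp
next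
  case False
  \<comment> \<open>a non-integrable function has integral 0, which is where \<open>0 \<le> C\<close> is needed\<close>
  then have "(LBINT t=a..b. f t) = 0"
    using assms(1) by (simp add: interval_lebesgue_integral_def interval_lebesgue_integrable_def
        set_lebesgue_integral_def set_integrable_def not_integrable_integral_eq)
  then show ?thesis using assms by simp
qed

lemma dtm_delta_le:
  assumes "0 \<le> r" "t < measure M (cball x r)"
  shows "dtm_delta M t x \<le> r"
  unfolding dtm_delta_def using assms by (intro cInf_lower) (auto intro: bdd_belowI[where m=0])

lemma dtm_delta_nonneg:
  assumes "0 \<le> r" "t < measure M (cball x r)"
  shows "0 \<le> dtm_delta M t x"
  unfolding dtm_delta_def using assms by (intro cInf_greatest) auto

lemma dtm_le_if_dtm_delta_le:
  assumes "0 < m" "0 \<le> R"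
    and "\<And>t. 0 < t \<Longrightarrow> t < m \<Longrightarrow> 0 \<le> dtm_delta M t x \<and> dtm_delta M t x \<le> R"
  shows "dtm M m x \<le> R"
proof -
  have "(LBINT t=ereal 0..m. (dtm_delta M t x)\<^sup>2) \<le> R\<^sup>2 * (m - 0)"
    using assms by (intro interval_integral_le_const power_mono) auto
  then have "dtm M m x \<le> sqrt (R\<^sup>2)"
    unfolding dtm_def using assms(1) by (intro real_sqrt_le_mono) (simp add: zero_ereal_def field_simps)
  then show ?thesis using assms(2) by simp
qed

lemma obtain_radius_pow_between:
  fixes a t m :: real and d :: nat
  assumes "0 < a" "d \<ge> 1" "0 \<le> t" "t < m"
  obtains r where "0 < r" "r < (m / a) powr (1 / real d)" "t < a * r ^ d"
proof
  define y where "y = (t / a + m / a) / 2"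
  have y: "0 < y" "t / a < y" "y < m / a"
    using assms by (auto simp: y_def field_simps)
  show "0 < y powr (1 / real d)" using y by simp
  show "y powr (1 / real d) < (m / a) powr (1 / real d)"
    using y assms(2) by (intro powr_less_mono2) auto
  have "(y powr (1 / real d)) ^ d = y"
    using y assms(2) by (simp add: powr_realpow[symmetric] powr_powr)
  then show "t < a * (y powr (1 / real d)) ^ d"
    using y assms(1) by (simp add: field_simps)
qed

lemma dtm_delta_le_growth_radius:
  fixes M :: "'a::euclidean_space measure" and d :: nat and m a t :: real
  assumes "finite_measure M" "sets M = sets borel" "0 < a" "d \<ge> 1" "0 \<le> t" "t < m"
    and growth: "\<And>r. 0 < r \<Longrightarrow> r < (m / a) powr (1 / real d)
                  \<Longrightarrow> a * r ^ d \<le> measure M (ball x r)"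
  shows "0 \<le> dtm_delta M t x \<and> dtm_delta M t x \<le> (m / a) powr (1 / real d)"
proof -
  obtain r where r: "0 < r" "r < (m / a) powr (1 / real d)" "t < a * r ^ d"
    using obtain_radius_pow_between assms(3-6) .
  have "t < measure M (ball x r)" using r growth[OF r(1,2)] by simp
  also have "\<dots> \<le> measure M (cball x r)"
    using assms(1,2) by (intro finite_measure.finite_measure_mono) auto
  finally have mass: "t < measure M (cball x r)" .
  show ?thesis
    using dtm_delta_le[OF _ mass] dtm_delta_nonneg[OF _ mass] r by simp
qed

theorem lemma1p4:
  fixes M :: "'a::euclidean_space measure" and d :: nat and m a :: real
  assumes "prob_space M" and "sets M = sets borel"
    and "d \<ge> 1" and "0 < m" and "m < 1" and "0 < a"
    and "\<And>x r. x \<in> msupp M \<Longrightarrow> 0 < r \<Longrightarrow> r < (m / a) powr (1 / real d)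
            \<Longrightarrow> measure M (ball x r) \<ge> a * r ^ d"
  shows "(SUP x\<in>msupp M. ereal (dtm M m x)) \<le> ereal (a powr (- 1 / real d) * m powr (1 / real d))"
proof -
  define R where "R = (m / a) powr (1 / real d)"
  have "a powr (- 1 / real d) * m powr (1 / real d) = R"
    unfolding R_def using assms(4,6) by (simp add: powr_divide powr_minus_divide field_simps)
  moreover have "dtm M m x \<le> R" if "x \<in> msupp M" for x
  proof (rule dtm_le_if_dtm_delta_le)
    show "0 \<le> R" by (simp add: R_def)
    fix t assume "0 < t" "t < m"
    then show "0 \<le> dtm_delta M t x \<and> dtm_delta M t x \<le> R"
      unfolding R_def using assms that prob_space.finite_measure
      by (intro dtm_delta_le_growth_radius) auto
  qed fact
  ultimately show ?thesis by (simp add: SUP_least)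
qed

end
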